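(* Let $\mathcal S=\{(k_{tj},C_{tj})\in\mathbb R_+^2: t\in\{1,\dots,n\},\ j\in\{1,\dots,U(t)\}\}$. There exists a nonnegative martingale $X_1,\dots,X_n$ (with each $X_t$ integrable) such that $E[(X_t-k_{tj})^+]=C_{tj}$ for all $(k_{tj},C_{tj})\in\mathcal S$ if and only if there exists a sequence of convex functions $g_1,\dots,g_n:\mathbb R_+\to\mathbb R_+$ which is nondecreasing (i.e. $g_1(x)\le g_2(x)\le\dots\le g_n(x)$ for all $x\ge0$) such that for each $t\in\{1,\dots,n\}$: (a) $g_t(0)=g_1(0)$; (b) $g_t(x)\ge g_t(0)-x$ for all $x\ge0$; (c) $g_t(x)\to0$ as $x\to\infty$; (d) $g_t(k_{tj})=C_{tj}$ for each $j\in\{1,\dots,U(t)\}$. *)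

theory Defs
  imports "HOL-Probability.Probability"
begin

definition natural_filtration :: "'a measure \<Rightarrow> (nat \<Rightarrow> 'a \<Rightarrow> real) \<Rightarrow> nat \<Rightarrow> 'a measure" where
  "natural_filtration M X t =
     sigma (space M) (\<Union>s\<in>{1..t}. {X s -` B \<inter> space M | B. B \<in> sets borel})"

definition finite_martingale :: "'a measure \<Rightarrow> (nat \<Rightarrow> 'a \<Rightarrow> real) \<Rightarrow> nat \<Rightarrow> bool" where
  "finite_martingale M X n \<longleftrightarrow>
     prob_space M \<and>
     (\<forall>t\<in>{1..n}. X t \<in> borel_measurable M \<and> integrable M (X t)) \<and>
     (\<forall>t\<in>{1..<n}. AE \<omega> in M.
        real_cond_exp M (natural_filtration M X t) (X (Suc t)) \<omega> = X t \<omega>)"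

end

theory Submission
  imports Defs
begin

(*
  Necessity: g t x = E[(X t - x)^+] is convex, tends to 0, lies above E[X t] - x, and its value
  at 0 is the constant mean of the martingale.  It is nondecreasing in t because the event
  A = {X t > x} is F_t-measurable, so E[(X t - x)^+] = E[1_A (X t - x)] = E[1_A (X (t+1) - x)],
  which is at most E[(X (t+1) - x)^+].

  Sufficiency: only the finitely many strikes G = {0} \<union> {k t j} matter.  Sweeping the mass that
  a finitely supported law puts inside an interval (a, b) to the endpoints a and b preserves the
  mean and replaces its call function on (a, b) by the chord.  Taking for (a, b) the interval
  where the call function lies below a given line, whose endpoints exist by convexity and the
  intermediate value theorem, raises the call function to its maximum with that line.  On G,
  g (t+1) is the maximum of the call function of X t and the chords of g (t+1) between adjacent
  points of G, so finitely many such mean-preserving kernels turn the law of X t into a law whose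
  call function agrees with g (t+1) on G.  The resulting Markov chain, started at the common
  value m = g t 0, is the required martingale.
*)

section \<open>Call prices\<close>

definition call_price :: "'a measure \<Rightarrow> ('a \<Rightarrow> real) \<Rightarrow> real \<Rightarrow> real" where
  "call_price M Y x = (\<integral>\<omega>. max (Y \<omega> - x) 0 \<partial>M)"

lemma call_price_nonneg: "0 \<le> call_price M Y x"
  unfolding call_price_def by (rule integral_nonneg_AE) auto

lemma hinge_convex:
  fixes y x z u :: real
  assumes "0 \<le> u" "u \<le> 1"
  shows "max (y - ((1 - u) * x + u * z)) 0 \<le> (1 - u) * max (y - x) 0 + u * max (y - z) 0"
proof -
  have "y - ((1 - u) * x + u * z) = (1 - u) * (y - x) + u * (y - z)"
    by (simp add: algebra_simps)
  moreover have "(1 - u) * (y - x) \<le> (1 - u) * max (y - x) 0" "u * (y - z) \<le> u * max (y - z) 0"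
    using assms by (intro mult_left_mono; simp)+
  ultimately show ?thesis
    using assms by simp
qed

context prob_space
begin

lemma integrable_call_payoff:
  fixes Y :: "'a \<Rightarrow> real"
  assumes "integrable M Y"
  shows "integrable M (\<lambda>\<omega>. max (Y \<omega> - x) 0)"
  using assms by (intro integrable_max Bochner_Integration.integrable_diff) auto

lemma call_price_convex:
  assumes "integrable M Y"
  shows "convex_on UNIV (call_price M Y)"
proof (rule convex_onI)
  fix u x z :: real
  assume u: "0 < u" "u < 1"
  have "call_price M Y ((1 - u) *\<^sub>R x + u *\<^sub>R z)
      \<le> (\<integral>\<omega>. (1 - u) * max (Y \<omega> - x) 0 + u * max (Y \<omega> - z) 0 \<partial>M)"
    unfolding call_price_def
    using u hinge_convex[of u] integrable_call_payoff[OF assms]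
    by (intro integral_mono) auto
  also have "\<dots> = (1 - u) * call_price M Y x + u * call_price M Y z"
    unfolding call_price_def using integrable_call_payoff[OF assms] by simp
  finally show "call_price M Y ((1 - u) *\<^sub>R x + u *\<^sub>R z)
    \<le> (1 - u) * call_price M Y x + u * call_price M Y z" .
qed simp

lemma call_price_ge:
  assumes "integrable M Y"
  shows "expectation Y - x \<le> call_price M Y x"
proof -
  have "expectation Y - x = (\<integral>\<omega>. Y \<omega> - x \<partial>M)"
    using assms by (simp add: prob_space)
  also have "\<dots> \<le> call_price M Y x"
    unfolding call_price_def using assms integrable_call_payoff[OF assms]
    by (intro integral_mono) auto
  finally show ?thesis .
qed

lemma call_price_nonpos_strike:
  assumes "integrable M Y" "AE \<omega> in M. 0 \<le> Y \<omega>" "x \<le> 0"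
  shows "call_price M Y x = expectation Y - x"
proof -
  have "call_price M Y x = (\<integral>\<omega>. Y \<omega> - x \<partial>M)"
    unfolding call_price_def using assms by (intro integral_cong_AE) auto
  then show ?thesis
    using assms(1) by (simp add: prob_space)
qed

lemma call_price_tendsto_zero:
  assumes "integrable M Y"
  shows "(call_price M Y \<longlongrightarrow> 0) at_top"
proof -
  have "((\<lambda>x. \<integral>\<omega>. max (Y \<omega> - x) 0 \<partial>M) \<longlongrightarrow> (\<integral>\<omega>. 0 \<partial>M)) at_top"
  proof (rule integral_dominated_convergence_at_top[where w = "\<lambda>\<omega>. \<bar>Y \<omega>\<bar>"])
    show "\<And>x. (\<lambda>\<omega>. max (Y \<omega> - x) 0) \<in> borel_measurable M"
      using assms by measurable
    show "AE \<omega> in M. ((\<lambda>x. max (Y \<omega> - x) 0) \<longlongrightarrow> 0) at_top"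
    proof (rule AE_I2)
      fix \<omega>
      have "\<forall>\<^sub>F x in at_top. max (Y \<omega> - x) 0 = 0"
        using eventually_ge_at_top[of "Y \<omega>"] by eventually_elim simp
      then show "((\<lambda>x. max (Y \<omega> - x) 0) \<longlongrightarrow> 0) at_top"
        by (rule tendsto_eventually)
    qed
    show "\<forall>\<^sub>F x in at_top. AE \<omega> in M. norm (max (Y \<omega> - x) 0) \<le> \<bar>Y \<omega>\<bar>"
      using eventually_ge_at_top[of 0] by eventually_elim auto
  qed (use assms in auto)
  then show ?thesis
    by (simp add: call_price_def[abs_def])
qed

lemma integral_indicator_times_excess:
  assumes "integrable M Y" "A \<in> events"
  shows "(\<integral>\<omega>. indicator A \<omega> * (Y \<omega> - x) \<partial>M) = (\<integral>\<omega>\<in>A. Y \<omega> \<partial>M) - x * prob A"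
proof -
  have "integrable M (\<lambda>\<omega>. indicator A \<omega> * Y \<omega>)" "integrable M (\<lambda>\<omega>. indicator A \<omega> * x)"
    using integrable_mult_indicator[OF assms(2) assms(1)]
      integrable_mult_indicator[OF assms(2) integrable_const[of x]]
    by simp_all
  then have "(\<integral>\<omega>. indicator A \<omega> * (Y \<omega> - x) \<partial>M)
      = (\<integral>\<omega>. indicator A \<omega> * Y \<omega> \<partial>M) - (\<integral>\<omega>. indicator A \<omega> * x \<partial>M)"
    unfolding right_diff_distrib by (rule Bochner_Integration.integral_diff)
  then show ?thesis
    using assms(2) by (simp add: set_lebesgue_integral_def mult.commute)
qed

lemma set_integral_le_call_price:
  assumes "integrable M Y" "A \<in> events"
  shows "(\<integral>\<omega>\<in>A. Y \<omega> \<partial>M) - x * prob A \<le> call_price M Y x"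
  unfolding integral_indicator_times_excess[OF assms, symmetric] call_price_def
proof (rule integral_mono)
  show "integrable M (\<lambda>\<omega>. indicator A \<omega> * (Y \<omega> - x))"
    using integrable_mult_indicator[OF assms(2) Bochner_Integration.integrable_diff[OF assms(1)]]
    by simp
qed (auto simp: indicator_def integrable_call_payoff[OF assms(1)])

lemma call_price_eq_set_integral:
  fixes Y :: "'a \<Rightarrow> real" and x :: real
  assumes "integrable M Y"
  defines "A \<equiv> {\<omega> \<in> space M. x < Y \<omega>}"
  shows "call_price M Y x = (\<integral>\<omega>\<in>A. Y \<omega> \<partial>M) - x * prob A"
proof -
  have A: "A \<in> events"
    unfolding A_def using assms(1) by measurable
  have "call_price M Y x = (\<integral>\<omega>. indicator A \<omega> * (Y \<omega> - x) \<partial>M)"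
    unfolding call_price_def A_def
    by (intro Bochner_Integration.integral_cong) (auto simp: indicator_def)
  then show ?thesis
    using integral_indicator_times_excess[OF assms(1) A] by simp
qed

end

section \<open>Natural filtrations and martingales\<close>

lemma space_natural_filtration: "space (natural_filtration M X t) = space M"
  unfolding natural_filtration_def by (rule space_measure_of) auto

lemma sets_natural_filtration:
  "sets (natural_filtration M X t) =
     sigma_sets (space M) (\<Union>s\<in>{1..t}. {X s -` B \<inter> space M | B. B \<in> sets borel})"
  unfolding natural_filtration_def by (rule sets_measure_of) auto

lemma vimage_in_natural_filtration:
  "s \<in> {1..t} \<Longrightarrow> B \<in> sets borel \<Longrightarrow> X s -` B \<inter> space M \<in> sets (natural_filtration M X t)"
  unfolding sets_natural_filtration by (rule sigma_sets.Basic) blast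

lemma natural_filtration_measurable: "1 \<le> t \<Longrightarrow> X t \<in> borel_measurable (natural_filtration M X t)"
  by (rule measurableI) (auto simp: space_natural_filtration intro: vimage_in_natural_filtration)

lemma subalgebra_natural_filtration:
  assumes "\<And>s. s \<in> {1..t} \<Longrightarrow> X s \<in> borel_measurable M"
  shows "subalgebra M (natural_filtration M X t)"
  unfolding subalgebra_def space_natural_filtration sets_natural_filtration
  using assms measurable_sets by (auto intro!: sets.sigma_sets_subset)

lemma (in prob_space) sigma_finite_subalgebra_natural_filtration:
  assumes "\<And>s. s \<in> {1..t} \<Longrightarrow> X s \<in> borel_measurable M"
  shows "sigma_finite_subalgebra M (natural_filtration M X t)"
  using subalgebra_natural_filtration[OF assms] finite_measure_axioms
  by (intro finite_measure_subalgebra_is_sigma_finite)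
     (simp add: finite_measure_subalgebra_def finite_measure_subalgebra_axioms_def)

lemma natural_filtration_mem_iff:
  assumes "A \<in> sets (natural_filtration M X t)" "\<omega> \<in> space M" "\<omega>' \<in> space M"
    and "\<And>s. s \<in> {1..t} \<Longrightarrow> X s \<omega> = X s \<omega>'"
  shows "\<omega> \<in> A \<longleftrightarrow> \<omega>' \<in> A"
  using assms(1) unfolding sets_natural_filtration
proof (induction rule: sigma_sets.induct)
  case (Compl a)
  then show ?case using assms(2,3) by blast
qed (use assms(2-4) in auto)

lemma finite_martingale_set_integral:
  assumes mart: "finite_martingale M X n" and t: "t \<in> {1..<n}"
    and A: "A \<in> sets (natural_filtration M X t)"
  shows "(\<integral>\<omega>\<in>A. X (Suc t) \<omega> \<partial>M) = (\<integral>\<omega>\<in>A. X t \<omega> \<partial>M)"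
proof -
  interpret prob_space M
    using mart by (simp add: finite_martingale_def)
  have X: "X s \<in> borel_measurable M" "integrable M (X s)" if "s \<in> {1..n}" for s
    using mart that by (auto simp: finite_martingale_def)
  interpret F: sigma_finite_subalgebra M "natural_filtration M X t"
    using t by (intro sigma_finite_subalgebra_natural_filtration X) auto
  have "A \<in> sets M"
    using A F.subalg by (auto simp: subalgebra_def)
  have "(\<integral>\<omega>\<in>A. X (Suc t) \<omega> \<partial>M) =
      (\<integral>\<omega>\<in>A. real_cond_exp M (natural_filtration M X t) (X (Suc t)) \<omega> \<partial>M)"
    using t A by (intro F.real_cond_exp_intA X) auto
  also have "\<dots> = (\<integral>\<omega>\<in>A. X t \<omega> \<partial>M)"
    using mart t \<open>A \<in> sets M\<close> X(1)[of t]
    by (intro set_lebesgue_integral_cong_AE) (auto simp: finite_martingale_def)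
  finally show ?thesis .
qed

lemma finite_martingaleI_set_integral:
  assumes "prob_space M"
    and X: "\<And>t. t \<in> {1..n} \<Longrightarrow> X t \<in> borel_measurable M" "\<And>t. t \<in> {1..n} \<Longrightarrow> integrable M (X t)"
    and step: "\<And>t A. t \<in> {1..<n} \<Longrightarrow> A \<in> sets (natural_filtration M X t) \<Longrightarrow>
      (\<integral>\<omega>\<in>A. X (Suc t) \<omega> \<partial>M) = (\<integral>\<omega>\<in>A. X t \<omega> \<partial>M)"
  shows "finite_martingale M X n"
  unfolding finite_martingale_def
proof (intro conjI ballI assms)
  interpret prob_space M by fact
  fix t assume t: "t \<in> {1..<n}"
  interpret F: sigma_finite_subalgebra M "natural_filtration M X t"
    using t by (intro sigma_finite_subalgebra_natural_filtration X) auto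
  show "AE \<omega> in M. real_cond_exp M (natural_filtration M X t) (X (Suc t)) \<omega> = X t \<omega>"
    using t by (intro F.real_cond_exp_charact step X natural_filtration_measurable) auto
qed

lemma finite_martingale_expectation_eq:
  assumes mart: "finite_martingale M X n" and t: "t \<in> {1..n}"
  shows "(\<integral>\<omega>. X t \<omega> \<partial>M) = (\<integral>\<omega>. X 1 \<omega> \<partial>M)"
  using t
proof (induction t)
  case (Suc t)
  show ?case
  proof (cases "t = 0")
    case False
    then have t: "t \<in> {1..<n}"
      using Suc.prems by auto
    have "space M \<in> sets (natural_filtration M X t)"
      using sets.top[of "natural_filtration M X t"] by (simp add: space_natural_filtration)
    from finite_martingale_set_integral[OF mart t this] have "(\<integral>\<omega>. X (Suc t) \<omega> \<partial>M) = (\<integral>\<omega>. X t \<omega> \<partial>M)"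
      using mart t by (simp add: set_integral_space finite_martingale_def)
    then show ?thesis
      using Suc t by simp
  qed simp
qed simp

lemma finite_martingale_call_price_mono:
  assumes mart: "finite_martingale M X n" and t: "t \<in> {1..<n}"
  shows "call_price M (X t) x \<le> call_price M (X (Suc t)) x"
proof -
  interpret prob_space M
    using mart by (simp add: finite_martingale_def)
  have X: "integrable M (X s)" if "s \<in> {1..n}" for s
    using mart that by (auto simp: finite_martingale_def)
  define A where "A = {\<omega> \<in> space M. x < X t \<omega>}"
  have "A = X t -` {x<..} \<inter> space M"
    by (auto simp: A_def)
  then have AF: "A \<in> sets (natural_filtration M X t)"
    using t by (auto intro: vimage_in_natural_filtration)
  moreover have "subalgebra M (natural_filtration M X t)"
    using mart t by (intro subalgebra_natural_filtration) (auto simp: finite_martingale_def)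
  ultimately have "A \<in> events"
    by (auto simp: subalgebra_def)
  have "call_price M (X t) x = (\<integral>\<omega>\<in>A. X t \<omega> \<partial>M) - x * prob A"
    unfolding A_def using t by (intro call_price_eq_set_integral X) auto
  also have "\<dots> = (\<integral>\<omega>\<in>A. X (Suc t) \<omega> \<partial>M) - x * prob A"
    using finite_martingale_set_integral[OF mart t AF] by simp
  also have "\<dots> \<le> call_price M (X (Suc t)) x"
    using t \<open>A \<in> events\<close> by (intro set_integral_le_call_price X) auto
  finally show ?thesis .
qed

lemma martingale_imp_call_prices:
  fixes M :: "'a measure"
  assumes mart: "finite_martingale M X n"
    and pos: "\<forall>t\<in>{1..n}. \<forall>\<omega>\<in>space M. X t \<omega> \<ge> 0"
    and calls: "\<forall>t\<in>{1..n}. \<forall>j\<in>{1..U t}. integral\<^sup>L M (\<lambda>\<omega>. max (X t \<omega> - k t j) 0) = C t j"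
  shows "\<exists>g :: nat \<Rightarrow> real \<Rightarrow> real.
            (\<forall>t\<in>{1..n}. convex_on {0..} (g t)) \<and>
            (\<forall>t\<in>{1..n}. \<forall>x\<ge>0. g t x \<ge> 0) \<and>
            (\<forall>t\<in>{1..<n}. \<forall>x\<ge>0. g t x \<le> g (Suc t) x) \<and>
            (\<forall>t\<in>{1..n}.
               g t 0 = g 1 0 \<and>
               (\<forall>x\<ge>0. g t x \<ge> g t 0 - x) \<and>
               (g t \<longlongrightarrow> 0) at_top \<and>
               (\<forall>j\<in>{1..U t}. g t (k t j) = C t j))"
proof -
  interpret prob_space M
    using mart by (simp add: finite_martingale_def)
  have X: "integrable M (X t)" if "t \<in> {1..n}" for t
    using mart that by (simp add: finite_martingale_def)
  have at_zero: "call_price M (X t) 0 = expectation (X 1)" if t: "t \<in> {1..n}" for t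
    using call_price_nonpos_strike[OF X[OF t], of 0] pos t
      finite_martingale_expectation_eq[OF mart t]
    by auto
  have convex: "convex_on {0..} (call_price M (X t))" if t: "t \<in> {1..n}" for t
    using call_price_convex[OF X[OF t]] by (rule convex_on_subset) auto
  have lower: "call_price M (X t) 0 - x \<le> call_price M (X t) x" if t: "t \<in> {1..n}" for t x
    using call_price_ge[OF X[OF t], of x] at_zero[OF t] finite_martingale_expectation_eq[OF mart t]
    by simp
  show ?thesis
    using convex call_price_nonneg finite_martingale_call_price_mono[OF mart] at_zero lower
      call_price_tendsto_zero[OF X] calls[folded call_price_def]
    by (intro exI[of _ "\<lambda>t. call_price M (X t)"]) auto
qed

section \<open>Secants of convex functions\<close>

lemma convex_on_le_secant:
  fixes f :: "real \<Rightarrow> real"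
  assumes f: "convex_on I f" and I: "a \<in> I" "b \<in> I" and x: "a \<le> x" "x \<le> b" and ab: "a < b"
  shows "f x \<le> f a + (f b - f a) / (b - a) * (x - a)"
proof (cases "x = a \<or> x = b")
  case False
  then have "(f a - f x) / (a - x) \<le> (f a - f b) / (a - b)"
    using convex_on_slope_le(1)[OF f I] x by simp
  then show ?thesis
    using False x by (simp add: field_simps)
qed (use ab in auto)

lemma convex_on_ge_secant:
  fixes f :: "real \<Rightarrow> real"
  assumes f: "convex_on I f" and I: "a \<in> I" "b \<in> I" "x \<in> I" and ab: "a < b" and x: "x \<le> a \<or> b \<le> x"
  shows "f a + (f b - f a) / (b - a) * (x - a) \<le> f x"
proof -
  consider "x = a \<or> x = b" | "x < a" | "b < x"
    using x by linarith
  then show ?thesis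
  proof cases
    case 2
    then have "(f x - f b) / (x - b) \<le> (f a - f b) / (a - b)"
      using convex_on_slope_le(2)[OF f I(3,2) _ ab] by simp
    then show ?thesis
      using 2 ab by (simp add: field_simps)
  next
    case 3
    then have "(f a - f b) / (a - b) \<le> (f a - f x) / (a - x)"
      using convex_on_slope_le(1)[OF f I(1,3) ab] by simp
    then show ?thesis
      using 3 ab by (simp add: field_simps)
  qed (use ab in auto)
qed

lemma convex_on_sign_change:
  fixes h :: "real \<Rightarrow> real"
  assumes h: "convex_on UNIV h"
    and l: "0 \<le> h l" "l \<le> x0" and x0: "h x0 < 0" and u: "x0 \<le> u" "0 \<le> h u"
  shows "\<exists>a b. l \<le> a \<and> a < b \<and> (\<forall>x. a \<le> x \<and> x \<le> b \<longrightarrow> h x \<le> 0) \<and>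
    (\<forall>x. x \<le> a \<or> b \<le> x \<longrightarrow> 0 \<le> h x)"
proof -
  have cont: "continuous_on {p..q} h" for p q
    using convex_on_continuous[OF open_UNIV h] by (rule continuous_on_subset) simp
  obtain a where a: "l \<le> a" "a \<le> x0" "h a = 0"
    using IVT2'[of h x0 0 l, OF _ l(1) l(2) cont] x0 by auto
  obtain b where b: "x0 \<le> b" "b \<le> u" "h b = 0"
    using IVT'[of h x0 0 u, OF _ u(2) u(1) cont] x0 by auto
  have "a \<noteq> x0"
    using a x0 by auto
  then have ab: "a < b"
    using a b by linarith
  have "h x \<le> 0" if "a \<le> x" "x \<le> b" for x
    using convex_on_le_secant[OF h _ _ that ab] a b by simp
  moreover have "0 \<le> h x" if "x \<le> a \<or> b \<le> x" for x
    using convex_on_ge_secant[OF h _ _ _ ab that] a b by simp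
  ultimately show ?thesis
    using a ab by blast
qed

lemma affine_below_tendsto_zero:
  fixes g :: "real \<Rightarrow> real"
  assumes below: "\<forall>\<^sub>F x in at_top. c + s * x \<le> g x" and g: "(g \<longlongrightarrow> 0) at_top"
  shows "s \<le> 0" and "s = 0 \<Longrightarrow> c \<le> 0"
proof -
  show "s \<le> 0"
  proof (rule ccontr)
    assume "\<not> s \<le> 0"
    then have "filterlim (\<lambda>x. c + s * x) at_top at_top"
      by (intro filterlim_tendsto_add_at_top[OF tendsto_const]
          filterlim_tendsto_pos_mult_at_top[OF tendsto_const _ filterlim_ident]) auto
    then have "filterlim g at_top at_top"
      using below by (rule filterlim_at_top_mono)
    then show False
      using g by (rule filterlim_at_top_nhds) simp
  qed
  show "c \<le> 0" if "s = 0"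
    using below that by (intro tendsto_le[OF _ g tendsto_const]) auto
qed

lemma secant_line_admissible:
  fixes g :: "real \<Rightarrow> real"
  assumes g: "convex_on {0..} g" "\<forall>x\<ge>0. g 0 - x \<le> g x" "(g \<longlongrightarrow> 0) at_top"
    and ab: "0 \<le> a" "a < b"
  defines "s \<equiv> (g b - g a) / (b - a)"
  shows "g a - s * a \<le> g 0" "-1 \<le> s" "s \<le> 0" "s = 0 \<longrightarrow> g a - s * a \<le> 0"
proof -
  have secant: "g a + s * (x - a) \<le> g x" if "0 \<le> x" "x \<le> a \<or> b \<le> x" for x
    using convex_on_ge_secant[OF g(1) _ _ _ ab(2) that(2)] ab that(1) by (simp add: s_def)
  have above: "g a - s * a + s * x \<le> g x" if "0 \<le> x" "x \<le> a \<or> b \<le> x" for x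
    using secant[OF that] by (simp add: algebra_simps)
  show intercept: "g a - s * a \<le> g 0"
    using above[of 0] ab by simp
  show "-1 \<le> s"
  proof (cases "a = 0")
    case True
    then show ?thesis
      using g(2) ab by (simp add: s_def field_simps)
  next
    case False
    then have "- a \<le> s * a"
      using g(2) ab intercept by force
    then show ?thesis
      using mult_le_cancel_right_pos[of a "-1" s] False ab by simp
  qed
  have "\<forall>\<^sub>F x in at_top. g a - s * a + s * x \<le> g x"
    using eventually_ge_at_top[of b] by eventually_elim (use ab above in auto)
  from affine_below_tendsto_zero[OF this g(3)]
  show "s \<le> 0" "s = 0 \<longrightarrow> g a - s * a \<le> 0"
    by auto
qed

section \<open>Mean-preserving kernels on finitely supported laws\<close>

abbreviation pmf_call :: "real pmf \<Rightarrow> real \<Rightarrow> real" where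
  "pmf_call \<nu> \<equiv> call_price (measure_pmf \<nu>) (\<lambda>y. y)"

definition finite_nonneg_mean :: "real pmf \<Rightarrow> real \<Rightarrow> bool" where
  "finite_nonneg_mean \<nu> m \<longleftrightarrow>
     finite (set_pmf \<nu>) \<and> set_pmf \<nu> \<subseteq> {0..} \<and> measure_pmf.expectation \<nu> (\<lambda>y. y) = m"

definition martingale_kernel :: "(real \<Rightarrow> real pmf) \<Rightarrow> bool" where
  "martingale_kernel K \<longleftrightarrow> (\<forall>x\<ge>0. finite_nonneg_mean (K x) x)"

lemma expectation_bind_pmf_finite:
  fixes h :: "'b \<Rightarrow> real"
  assumes "finite (set_pmf p)" "\<And>x. x \<in> set_pmf p \<Longrightarrow> finite (set_pmf (K x))"
  shows "measure_pmf.expectation (p \<bind> K) h =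
    measure_pmf.expectation p (\<lambda>x. measure_pmf.expectation (K x) h)"
  using assms
  by (subst pmf_expectation_bind[of "set_pmf p"], simp_all)
     (subst integral_measure_pmf_real[of "set_pmf p"], auto simp: mult.commute)

lemma martingale_kernel_return: "martingale_kernel return_pmf"
  by (simp add: martingale_kernel_def finite_nonneg_mean_def)

lemma finite_nonneg_mean_bind:
  assumes \<nu>: "finite_nonneg_mean \<nu> m" and K: "martingale_kernel K"
  shows "finite_nonneg_mean (\<nu> \<bind> K) m"
proof -
  have K\<nu>: "finite_nonneg_mean (K x) x" if "x \<in> set_pmf \<nu>" for x
    using \<nu> K that by (auto simp: finite_nonneg_mean_def martingale_kernel_def)
  have "measure_pmf.expectation (\<nu> \<bind> K) (\<lambda>y. y) = measure_pmf.expectation \<nu> (\<lambda>x. x)"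
    using \<nu> K\<nu> by (subst expectation_bind_pmf_finite)
      (auto simp: finite_nonneg_mean_def AE_measure_pmf_iff intro!: integral_cong_AE)
  then show ?thesis
    using \<nu> K\<nu> by (auto simp: finite_nonneg_mean_def)
qed

lemma martingale_kernel_bind:
  assumes "martingale_kernel K" "martingale_kernel L"
  shows "martingale_kernel (\<lambda>x. K x \<bind> L)"
  using assms(1) finite_nonneg_mean_bind[OF _ assms(2)] by (simp add: martingale_kernel_def)

lemma pmf_call_nonpos_strike:
  assumes "finite_nonneg_mean \<nu> m" "x \<le> 0"
  shows "pmf_call \<nu> x = m - x"
  using assms measure_pmf.call_price_nonpos_strike[of \<nu> "\<lambda>y. y" x]
  by (auto simp: finite_nonneg_mean_def integrable_measure_pmf_finite AE_measure_pmf_iff)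

definition balayage :: "real \<Rightarrow> real \<Rightarrow> real \<Rightarrow> real pmf" where
  "balayage a b y =
     (if y \<in> {a<..<b} then map_pmf (\<lambda>c. if c then b else a) (bernoulli_pmf ((y - a) / (b - a)))
      else return_pmf y)"

lemma expectation_balayage:
  fixes h :: "real \<Rightarrow> real"
  assumes "a < b"
  shows "measure_pmf.expectation (balayage a b y) h =
    (if y \<in> {a<..<b} then h a + (h b - h a) / (b - a) * (y - a) else h y)"
proof (cases "y \<in> {a<..<b}")
  case True
  define p where "p = (y - a) / (b - a)"
  have "0 \<le> p" "p \<le> 1"
    using True by (auto simp: p_def)
  then have "measure_pmf.expectation (balayage a b y) h = h b * p + h a * (1 - p)"
    using True by (simp add: balayage_def integral_bernoulli_pmf p_def)
  also have "\<dots> = h a + (h b - h a) * p"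
    by (simp add: algebra_simps)
  finally show ?thesis
    using True by (simp add: p_def)
qed (auto simp: balayage_def)

lemma set_pmf_balayage: "set_pmf (balayage a b y) \<subseteq> {a, b, y}"
  by (auto simp: balayage_def)

lemma finite_set_pmf_balayage: "finite (set_pmf (balayage a b y))"
  using set_pmf_balayage by (rule finite_subset) simp

lemma martingale_kernel_balayage:
  assumes "0 \<le> a" "a < b"
  shows "martingale_kernel (balayage a b)"
  unfolding martingale_kernel_def finite_nonneg_mean_def
proof (intro allI impI conjI)
  fix y :: real assume "0 \<le> y"
  then show "finite (set_pmf (balayage a b y))" "set_pmf (balayage a b y) \<subseteq> {0..}"
    using finite_set_pmf_balayage set_pmf_balayage[of a b y] assms by auto
  show "measure_pmf.expectation (balayage a b y) (\<lambda>z. z) = y"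
    using assms by (simp add: expectation_balayage field_simps)
qed

lemma expectation_balayage_hinge:
  assumes "a < b"
  shows "measure_pmf.expectation (balayage a b y) (\<lambda>z. max (z - x) 0) =
    (if x \<in> {a<..<b} then max (y - a) 0 + (max (y - b) 0 - max (y - a) 0) / (b - a) * (x - a)
     else max (y - x) 0)"
  using assms by (auto simp: expectation_balayage max_def field_simps)

lemma pmf_call_bind_balayage:
  assumes fin: "finite (set_pmf \<nu>)" and ab: "a < b"
  shows "pmf_call (\<nu> \<bind> balayage a b) x =
    (if x \<in> {a<..<b} then pmf_call \<nu> a + (pmf_call \<nu> b - pmf_call \<nu> a) / (b - a) * (x - a)
     else pmf_call \<nu> x)" (is "_ = ?rhs")
proof -
  have "pmf_call (\<nu> \<bind> balayage a b) x =
      measure_pmf.expectation \<nu> (\<lambda>y. measure_pmf.expectation (balayage a b y) (\<lambda>z. max (z - x) 0))"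
    unfolding call_price_def using fin finite_set_pmf_balayage by (rule expectation_bind_pmf_finite)
  also have "\<dots> = ?rhs"
  proof (cases "x \<in> {a<..<b}")
    case True
    then show ?thesis
      by (simp add: expectation_balayage_hinge[OF ab] call_price_def
          integrable_measure_pmf_finite[OF fin])
  next
    case False
    then show ?thesis
      by (simp only: expectation_balayage_hinge[OF ab] call_price_def if_False)
  qed
  finally show ?thesis .
qed

lemma pmf_call_max_line:
  assumes \<nu>: "finite_nonneg_mean \<nu> m"
    and line: "\<alpha> \<le> m" "-1 \<le> s" "s \<le> 0" "s = 0 \<longrightarrow> \<alpha> \<le> 0"
  shows "\<exists>K. martingale_kernel K \<and> (\<forall>x. pmf_call (\<nu> \<bind> K) x = max (pmf_call \<nu> x) (\<alpha> + s * x))"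
proof -
  define h where "h x = pmf_call \<nu> x - (\<alpha> + s * x)" for x
  have fin: "finite (set_pmf \<nu>)"
    using \<nu> by (simp add: finite_nonneg_mean_def)
  have "concave_on UNIV (\<lambda>x. \<alpha> + s * x)"
    by (rule concave_on_linorderI) (simp_all add: algebra_simps)
  then have h_convex: "convex_on UNIV h"
    unfolding h_def[abs_def]
    using measure_pmf.call_price_convex integrable_measure_pmf_finite[OF fin]
    by (intro convex_on_diff) auto
  have h_nonpos_strike: "0 \<le> h x" if "x \<le> 0" for x
    using pmf_call_nonpos_strike[OF \<nu> that] line(1,2) that mult_right_mono_neg[of "-1" s x]
    by (simp add: h_def)
  show ?thesis
  proof (cases "\<exists>x0\<ge>0. h x0 < 0")
    case False
    then have "\<alpha> + s * x \<le> pmf_call \<nu> x" for x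
      using h_nonpos_strike[of x] by (cases "x \<le> 0") (auto simp: h_def not_less)
    then show ?thesis
      using martingale_kernel_return
      by (intro exI[of _ return_pmf]) (simp add: bind_return_pmf' max_absorb1)
  next
    case True
    then obtain x0 where x0: "0 \<le> x0" "h x0 < 0"
      by blast
    have "s \<noteq> 0"
      using x0 line(4) call_price_nonneg[of \<nu> "\<lambda>y. y" x0] by (auto simp: h_def)
    define x1 where "x1 = max x0 (\<alpha> / - s)"
    have "\<alpha> + s * x1 \<le> 0"
      using line(3) \<open>s \<noteq> 0\<close> mult_left_mono_neg[of "\<alpha> / - s" x1 s] by (simp add: x1_def)
    then have "0 \<le> h x1"
      using call_price_nonneg[of \<nu> "\<lambda>y. y" x1] by (simp add: h_def)
    moreover have "x0 \<le> x1"
      by (simp add: x1_def)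
    ultimately obtain a b where a: "0 \<le> a" and ab: "a < b"
      and inside: "\<And>x. a \<le> x \<and> x \<le> b \<Longrightarrow> h x \<le> 0"
      and outside: "\<And>x. x \<le> a \<or> b \<le> x \<Longrightarrow> 0 \<le> h x"
      using convex_on_sign_change[OF h_convex h_nonpos_strike[OF order.refl] x0] by blast
    have "h a \<le> 0" "h b \<le> 0"
      using inside ab by auto
    moreover have "0 \<le> h a" "0 \<le> h b"
      using outside by auto
    ultimately have "pmf_call \<nu> a = \<alpha> + s * a" "pmf_call \<nu> b = \<alpha> + s * b"
      by (simp_all add: h_def)
    then have secant:
      "pmf_call \<nu> a + (pmf_call \<nu> b - pmf_call \<nu> a) / (b - a) * (x - a) = \<alpha> + s * x" for x
      using ab by (simp add: field_simps)
    have "pmf_call (\<nu> \<bind> balayage a b) x = max (pmf_call \<nu> x) (\<alpha> + s * x)" for x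
      using inside[of x] outside[of x] pmf_call_bind_balayage[OF fin ab, of x] secant[of x]
      by (auto simp: h_def)
    then show ?thesis
      using martingale_kernel_balayage[OF a ab] by blast
  qed
qed

lemma pmf_call_max_lines:
  assumes fin: "finite \<Lambda>" and \<nu>: "finite_nonneg_mean \<nu> m"
    and lines: "\<forall>(\<alpha>, s)\<in>\<Lambda>. \<alpha> \<le> m \<and> -1 \<le> s \<and> s \<le> 0 \<and> (s = 0 \<longrightarrow> \<alpha> \<le> 0)"
  shows "\<exists>K. martingale_kernel K \<and>
    (\<forall>x. pmf_call (\<nu> \<bind> K) x = Max (insert (pmf_call \<nu> x) ((\<lambda>(\<alpha>, s). \<alpha> + s * x) ` \<Lambda>)))"
  using fin lines
proof (induction \<Lambda> rule: finite_induct)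
  case empty
  show ?case
    using martingale_kernel_return by (intro exI[of _ return_pmf]) (simp add: bind_return_pmf')
next
  case (insert l \<Lambda>)
  obtain \<alpha> s where l: "l = (\<alpha>, s)"
    by (cases l)
  from insert obtain K where K: "martingale_kernel K"
    and K_call: "\<And>x. pmf_call (\<nu> \<bind> K) x = Max (insert (pmf_call \<nu> x) ((\<lambda>(\<alpha>, s). \<alpha> + s * x) ` \<Lambda>))"
    by auto
  have "\<alpha> \<le> m" "-1 \<le> s" "s \<le> 0" "s = 0 \<longrightarrow> \<alpha> \<le> 0"
    using insert.prems l by auto
  then obtain L where L: "martingale_kernel L"
    and L_call: "\<And>x. pmf_call (\<nu> \<bind> K \<bind> L) x = max (pmf_call (\<nu> \<bind> K) x) (\<alpha> + s * x)"
    using pmf_call_max_line[OF finite_nonneg_mean_bind[OF \<nu> K]] by blast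
  have "pmf_call (\<nu> \<bind> (\<lambda>x. K x \<bind> L)) x =
      Max (insert (pmf_call \<nu> x) ((\<lambda>(\<alpha>, s). \<alpha> + s * x) ` insert l \<Lambda>))" for x
    using insert.hyps
    by (simp add: bind_assoc_pmf[symmetric] L_call K_call l max.commute insert_commute)
  then show ?case
    using martingale_kernel_bind[OF K L] by blast
qed

definition adjacent_pairs :: "'a::linorder set \<Rightarrow> ('a \<times> 'a) set" where
  "adjacent_pairs G = {(a, b). a \<in> G \<and> b \<in> G \<and> a < b \<and> G \<inter> {a<..<b} = {}}"

lemma finite_adjacent_pairs: "finite G \<Longrightarrow> finite (adjacent_pairs G)"
  by (rule finite_subset[of _ "G \<times> G"]) (auto simp: adjacent_pairs_def)

lemma adjacent_pairs_left_neighbour: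
  assumes "finite G" "y \<in> G" "c \<in> G" "c < y"
  shows "\<exists>a. (a, y) \<in> adjacent_pairs G"
proof -
  define a where "a = Max {c \<in> G. c < y}"
  have fin: "finite {c \<in> G. c < y}"
    using assms(1) by simp
  then have "a \<in> {c \<in> G. c < y}"
    unfolding a_def using assms(3,4) by (intro Max_in) auto
  moreover have "c' \<le> a" if "c' \<in> G" "c' < y" for c'
    unfolding a_def using fin that by (intro Max_ge) auto
  ultimately have "(a, y) \<in> adjacent_pairs G"
    using assms(2) by (force simp: adjacent_pairs_def)
  then show ?thesis ..
qed

lemma convex_on_secant_le_adjacent:
  fixes g :: "real \<Rightarrow> real"
  assumes "convex_on {0..} g" "G \<subseteq> {0..}" "y \<in> G" "(a, b) \<in> adjacent_pairs G"
  shows "g a + (g b - g a) / (b - a) * (y - a) \<le> g y"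
proof -
  have "a \<in> {0..}" "b \<in> {0..}" "y \<in> {0..}" "a < b" "y \<le> a \<or> b \<le> y"
    using assms(2-4) by (auto simp: adjacent_pairs_def)
  then show ?thesis
    by (intro convex_on_ge_secant[OF assms(1)])
qed

lemma pmf_call_interpolate:
  fixes g :: "real \<Rightarrow> real"
  assumes g: "convex_on {0..} g" "\<forall>x\<ge>0. g 0 - x \<le> g x" "(g \<longlongrightarrow> 0) at_top"
    and G: "finite G" "0 \<in> G" "G \<subseteq> {0..}"
    and \<nu>: "finite_nonneg_mean \<nu> (g 0)" and below: "\<forall>y\<in>G. pmf_call \<nu> y \<le> g y"
  shows "\<exists>K. martingale_kernel K \<and> (\<forall>y\<in>G. pmf_call (\<nu> \<bind> K) y = g y)"
proof -
  define slope where "slope a b = (g b - g a) / (b - a)" for a b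
  define \<Lambda> where "\<Lambda> = (\<lambda>(a, b). (g a - slope a b * a, slope a b)) ` adjacent_pairs G"
  have "finite \<Lambda>"
    using finite_adjacent_pairs[OF G(1)] by (simp add: \<Lambda>_def)
  moreover have "\<forall>(\<alpha>, s)\<in>\<Lambda>. \<alpha> \<le> g 0 \<and> -1 \<le> s \<and> s \<le> 0 \<and> (s = 0 \<longrightarrow> \<alpha> \<le> 0)"
  proof -
    have "0 \<le> a" "a < b" if "(a, b) \<in> adjacent_pairs G" for a b
      using that G(3) by (auto simp: adjacent_pairs_def)
    from secant_line_admissible[OF g this] show ?thesis
      by (auto simp: \<Lambda>_def slope_def)
  qed
  ultimately obtain K where K: "martingale_kernel K" and K_call:
    "\<And>x. pmf_call (\<nu> \<bind> K) x = Max (insert (pmf_call \<nu> x) ((\<lambda>(\<alpha>, s). \<alpha> + s * x) ` \<Lambda>))"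
    using pmf_call_max_lines[OF _ \<nu>] by blast
  have secant: "g a - slope a b * a + slope a b * y = g a + (g b - g a) / (b - a) * (y - a)"
    for a b y
    unfolding slope_def by (simp add: right_diff_distrib)
  have "Max (insert (pmf_call \<nu> y) ((\<lambda>(\<alpha>, s). \<alpha> + s * y) ` \<Lambda>)) = g y" if y: "y \<in> G" for y
  proof (rule Max_eqI)
    show "z \<le> g y" if "z \<in> insert (pmf_call \<nu> y) ((\<lambda>(\<alpha>, s). \<alpha> + s * y) ` \<Lambda>)" for z
      using that below y convex_on_secant_le_adjacent[OF g(1) G(3) y] by (auto simp: \<Lambda>_def secant)
    show "g y \<in> insert (pmf_call \<nu> y) ((\<lambda>(\<alpha>, s). \<alpha> + s * y) ` \<Lambda>)"
    proof (cases "y = 0")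
      case True
      then show ?thesis
        using pmf_call_nonpos_strike[OF \<nu>, of 0] by simp
    next
      case False
      then obtain a where "(a, y) \<in> adjacent_pairs G"
        using adjacent_pairs_left_neighbour[OF G(1) y G(2)] y G(3) by force
      moreover have "a < y"
        using calculation by (simp add: adjacent_pairs_def)
      ultimately show ?thesis
        by (auto simp: \<Lambda>_def image_iff secant intro!: bexI[of _ "(a, y)"])
    qed
  qed (use \<open>finite \<Lambda>\<close> in simp)
  then show ?thesis
    using K K_call by auto
qed

section \<open>The martingale on path space\<close>

text \<open>Coordinates after time t keep their initial value m.\<close>

primrec path_pmf :: "(nat \<Rightarrow> real \<Rightarrow> real pmf) \<Rightarrow> real \<Rightarrow> nat \<Rightarrow> (nat \<Rightarrow> real) pmf" where
  "path_pmf K m 0 = return_pmf (\<lambda>_. m)"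
| "path_pmf K m (Suc t) = path_pmf K m t \<bind> (\<lambda>w. map_pmf (\<lambda>y. w(Suc t := y)) (K t (w t)))"

lemma path_pmf_cong: "(\<And>s. s < t \<Longrightarrow> K s = K' s) \<Longrightarrow> path_pmf K m t = path_pmf K' m t"
  by (induction t) auto

lemma map_path_pmf_local:
  assumes "u \<le> t" and F: "\<And>w w'. (\<And>s. s \<le> u \<Longrightarrow> w s = w' s) \<Longrightarrow> F w = F w'"
  shows "map_pmf F (path_pmf K m t) = map_pmf F (path_pmf K m u)"
  using assms(1)
proof (induction t)
  case (Suc t)
  show ?case
  proof (cases "u = Suc t")
    case False
    then have "F (w(Suc t := y)) = F w" for w y
      using Suc.prems by (intro F) auto
    then have "map_pmf F (path_pmf K m (Suc t)) = map_pmf F (path_pmf K m t)"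
      by (simp add: map_bind_pmf map_pmf_comp map_pmf_const) (simp add: map_pmf_def)
    then show ?thesis
      using Suc False by simp
  qed simp
qed simp

lemma expectation_path_pmf_local:
  fixes F :: "(nat \<Rightarrow> real) \<Rightarrow> real"
  assumes "u \<le> t" "\<And>w w'. (\<And>s. s \<le> u \<Longrightarrow> w s = w' s) \<Longrightarrow> F w = F w'"
  shows "measure_pmf.expectation (path_pmf K m t) F = measure_pmf.expectation (path_pmf K m u) F"
proof -
  have "measure_pmf.expectation (map_pmf F (path_pmf K m t)) (\<lambda>x. x) =
      measure_pmf.expectation (map_pmf F (path_pmf K m u)) (\<lambda>x. x)"
    by (simp only: map_path_pmf_local[OF assms])
  then show ?thesis
    by simp
qed

lemma path_pmf_support:
  assumes K: "\<And>s. s < t \<Longrightarrow> martingale_kernel (K s)" and m: "0 \<le> m"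
  shows "finite (set_pmf (path_pmf K m t)) \<and> (\<forall>w\<in>set_pmf (path_pmf K m t). \<forall>s. 0 \<le> w s)"
  using K
proof (induction t)
  case (Suc t)
  then have fin: "finite (set_pmf (path_pmf K m t))"
    and nonneg: "\<And>w s. w \<in> set_pmf (path_pmf K m t) \<Longrightarrow> 0 \<le> w s"
    by auto
  have "finite_nonneg_mean (K t (w t)) (w t)" if "w \<in> set_pmf (path_pmf K m t)" for w
    using Suc.prems[of t] nonneg[OF that] by (simp add: martingale_kernel_def)
  then have "finite (set_pmf (K t (w t)))" "set_pmf (K t (w t)) \<subseteq> {0..}"
    if "w \<in> set_pmf (path_pmf K m t)" for w
    using that by (auto simp: finite_nonneg_mean_def)
  then show ?case
    using fin nonneg by auto
qed (use m in simp)

lemma marginal_path_pmf_Suc: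
  "map_pmf (\<lambda>w. w (Suc t)) (path_pmf K m (Suc t)) = map_pmf (\<lambda>w. w t) (path_pmf K m t) \<bind> K t"
  by (simp add: map_bind_pmf map_pmf_comp bind_map_pmf)

lemma finite_nonneg_mean_marginal:
  assumes "\<And>s. s < t \<Longrightarrow> martingale_kernel (K s)" "0 \<le> m"
  shows "finite_nonneg_mean (map_pmf (\<lambda>w. w t) (path_pmf K m t)) m"
  using assms(1)
proof (induction t)
  case (Suc t)
  then show ?case
    unfolding marginal_path_pmf_Suc by (intro finite_nonneg_mean_bind) auto
qed (use assms(2) in \<open>simp add: finite_nonneg_mean_def\<close>)

lemma expectation_path_pmf_Suc_times:
  fixes F :: "(nat \<Rightarrow> real) \<Rightarrow> real"
  assumes K: "\<And>s. s \<le> t \<Longrightarrow> martingale_kernel (K s)" and m: "0 \<le> m"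
    and F: "\<And>w y. F (w(Suc t := y)) = F w"
  shows "measure_pmf.expectation (path_pmf K m (Suc t)) (\<lambda>w. F w * w (Suc t)) =
    measure_pmf.expectation (path_pmf K m t) (\<lambda>w. F w * w t)"
proof -
  have supp: "finite (set_pmf (path_pmf K m t))" "\<And>w s. w \<in> set_pmf (path_pmf K m t) \<Longrightarrow> 0 \<le> w s"
    using path_pmf_support[of t K m] K m by auto
  have Kw: "finite_nonneg_mean (K t (w t)) (w t)" if "w \<in> set_pmf (path_pmf K m t)" for w
    using K[of t] supp(2)[OF that] by (simp add: martingale_kernel_def)
  have "measure_pmf.expectation (path_pmf K m (Suc t)) (\<lambda>w. F w * w (Suc t)) =
      measure_pmf.expectation (path_pmf K m t)
        (\<lambda>w. measure_pmf.expectation (K t (w t)) (\<lambda>y. F w * y))"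
    unfolding path_pmf.simps
    by (subst expectation_bind_pmf_finite) (use supp(1) Kw in \<open>auto simp: F finite_nonneg_mean_def\<close>)
  also have "\<dots> = measure_pmf.expectation (path_pmf K m t) (\<lambda>w. F w * w t)"
    using Kw by (intro integral_cong_AE) (auto simp: AE_measure_pmf_iff finite_nonneg_mean_def)
  finally show ?thesis .
qed

lemma finite_martingale_path_pmf:
  assumes K: "\<And>t. t < n \<Longrightarrow> martingale_kernel (K t)" and m: "0 \<le> m"
  shows "finite_martingale (measure_pmf (path_pmf K m n)) (\<lambda>t w. \<bar>w t\<bar>) n"
proof (rule finite_martingaleI_set_integral)
  let ?P = "path_pmf K m n"
  have fin: "finite (set_pmf ?P)" and nonneg: "\<And>w s. w \<in> set_pmf ?P \<Longrightarrow> 0 \<le> w s"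
    using path_pmf_support[of n K m] K m by auto
  show "prob_space (measure_pmf ?P)"
    by (rule prob_space_measure_pmf)
  show "(\<lambda>w. \<bar>w t\<bar>) \<in> borel_measurable (measure_pmf ?P)" for t
    by simp
  show "integrable (measure_pmf ?P) (\<lambda>w. \<bar>w t\<bar>)" for t
    by (rule integrable_measure_pmf_finite[OF fin])
  fix t A
  assume t: "t \<in> {1..<n}" and A: "A \<in> sets (natural_filtration (measure_pmf ?P) (\<lambda>t w. \<bar>w t\<bar>) t)"
  define F :: "(nat \<Rightarrow> real) \<Rightarrow> real" where "F = indicator A"
  have F_local: "F w = F w'" if "\<And>s. s \<le> t \<Longrightarrow> w s = w' s" for w w'
  proof -
    have "w \<in> A \<longleftrightarrow> w' \<in> A"
      by (rule natural_filtration_mem_iff[OF A]) (use that in auto)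
    then show ?thesis
      by (simp add: F_def indicator_def)
  qed
  have set_integral: "(\<integral>w\<in>A. \<bar>w s\<bar> \<partial>?P) = measure_pmf.expectation ?P (\<lambda>w. F w * w s)" for s
    unfolding set_lebesgue_integral_def F_def
    by (intro integral_cong_AE) (auto simp: AE_measure_pmf_iff nonneg)
  have F_times_local: "F w * w u = F w' * w' u" if "t \<le> u" "\<And>s. s \<le> u \<Longrightarrow> w s = w' s" for u w w'
    using F_local[of w w'] that by simp
  have "measure_pmf.expectation ?P (\<lambda>w. F w * w (Suc t)) =
      measure_pmf.expectation (path_pmf K m (Suc t)) (\<lambda>w. F w * w (Suc t))"
    using t by (intro expectation_path_pmf_local F_times_local) auto
  also have "\<dots> = measure_pmf.expectation (path_pmf K m t) (\<lambda>w. F w * w t)"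
    using t by (intro expectation_path_pmf_Suc_times K m F_local) auto
  also have "\<dots> = measure_pmf.expectation ?P (\<lambda>w. F w * w t)"
    using t by (intro expectation_path_pmf_local[symmetric] F_times_local) auto
  finally show "(\<integral>w\<in>A. \<bar>w (Suc t)\<bar> \<partial>?P) = (\<integral>w\<in>A. \<bar>w t\<bar> \<partial>?P)"
    by (simp only: set_integral)
qed

lemma expectation_path_pmf_call:
  assumes K: "\<And>s. s < n \<Longrightarrow> martingale_kernel (K s)" and m: "0 \<le> m" and t: "t \<le> n"
  shows "measure_pmf.expectation (path_pmf K m n) (\<lambda>w. max (\<bar>w t\<bar> - x) 0) =
    pmf_call (map_pmf (\<lambda>w. w t) (path_pmf K m t)) x"
proof -
  have "0 \<le> w t" if "w \<in> set_pmf (path_pmf K m n)" for w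
    using path_pmf_support[of n K m] K m that by auto
  then have "measure_pmf.expectation (path_pmf K m n) (\<lambda>w. max (\<bar>w t\<bar> - x) 0) =
      measure_pmf.expectation (path_pmf K m n) (\<lambda>w. max (w t - x) 0)"
    by (intro integral_cong_AE) (auto simp: AE_measure_pmf_iff)
  also have "\<dots> = measure_pmf.expectation (path_pmf K m t) (\<lambda>w. max (w t - x) 0)"
    using t by (intro expectation_path_pmf_local) auto
  finally show ?thesis
    by (simp add: call_price_def)
qed

lemma exists_martingale_kernels:
  fixes g :: "nat \<Rightarrow> real \<Rightarrow> real"
  assumes "\<forall>t\<in>{1..n}. convex_on {0..} (g t)"
    and "\<forall>t\<in>{1..n}. \<forall>x\<ge>0. 0 \<le> g t x"
    and "\<forall>t\<in>{1..<n}. \<forall>x\<ge>0. g t x \<le> g (Suc t) x"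
    and "\<forall>t\<in>{1..n}. g t 0 = m"
    and "\<forall>t\<in>{1..n}. \<forall>x\<ge>0. g t 0 - x \<le> g t x"
    and "\<forall>t\<in>{1..n}. (g t \<longlongrightarrow> 0) at_top"
    and G: "finite G" "0 \<in> G" "G \<subseteq> {0..}" and m: "0 \<le> m"
  shows "\<exists>K. (\<forall>t<n. martingale_kernel (K t)) \<and>
    (\<forall>t\<in>{1..n}. \<forall>y\<in>G. pmf_call (map_pmf (\<lambda>w. w t) (path_pmf K m t)) y = g t y)"
  using assms(1-6)
proof (induction n)
  case 0
  show ?case
    by simp
next
  case (Suc n)
  have "\<exists>K. (\<forall>t<n. martingale_kernel (K t)) \<and>
      (\<forall>t\<in>{1..n}. \<forall>y\<in>G. pmf_call (map_pmf (\<lambda>w. w t) (path_pmf K m t)) y = g t y)"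
    by (rule Suc.IH) (use Suc.prems in auto)
  then obtain K where K: "\<forall>t<n. martingale_kernel (K t)"
    and K_call: "\<forall>t\<in>{1..n}. \<forall>y\<in>G. pmf_call (map_pmf (\<lambda>w. w t) (path_pmf K m t)) y = g t y"
    by blast
  define \<nu> where "\<nu> = map_pmf (\<lambda>w. w n) (path_pmf K m n)"
  have \<nu>: "finite_nonneg_mean \<nu> (g (Suc n) 0)"
    unfolding \<nu>_def using finite_nonneg_mean_marginal K m Suc.prems(4) by auto
  have "pmf_call \<nu> y \<le> g (Suc n) y" if y: "y \<in> G" for y
  proof (cases "n = 0")
    case True
    then show ?thesis
      using Suc.prems(2,4,5) y G(3) by (auto simp: \<nu>_def call_price_def)
  next
    case False
    then show ?thesis
      using K_call Suc.prems(3) y G(3) by (auto simp: \<nu>_def)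
  qed
  then obtain L where L: "martingale_kernel L" and L_call: "\<forall>y\<in>G. pmf_call (\<nu> \<bind> L) y = g (Suc n) y"
    using pmf_call_interpolate[of "g (Suc n)", OF _ _ _ G \<nu>] Suc.prems(1,5,6) by auto
  define K' where "K' = K(n := L)"
  have path_K': "path_pmf K' m t = path_pmf K m t" if "t \<le> n" for t
    using that by (intro path_pmf_cong) (auto simp: K'_def)
  have "map_pmf (\<lambda>w. w (Suc n)) (path_pmf K' m (Suc n)) = \<nu> \<bind> L"
    unfolding marginal_path_pmf_Suc path_K'[OF order.refl] by (simp add: \<nu>_def K'_def)
  then have "pmf_call (map_pmf (\<lambda>w. w t) (path_pmf K' m t)) y = g t y"
    if "t \<in> {1..Suc n}" "y \<in> G" for t y
    using that K_call L_call path_K'[of t] by (cases "t = Suc n") auto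
  moreover have "martingale_kernel (K' t)" if "t < Suc n" for t
    using that K L by (auto simp: K'_def)
  ultimately show ?case
    by blast
qed

lemma call_prices_imp_martingale:
  fixes n :: nat and U :: "nat \<Rightarrow> nat" and k C :: "nat \<Rightarrow> nat \<Rightarrow> real" and g :: "nat \<Rightarrow> real \<Rightarrow> real"
  assumes k: "\<forall>t\<in>{1..n}. \<forall>j\<in>{1..U t}. k t j \<ge> 0 \<and> C t j \<ge> 0"
    and convex: "\<forall>t\<in>{1..n}. convex_on {0..} (g t)"
    and nonneg: "\<forall>t\<in>{1..n}. \<forall>x\<ge>0. g t x \<ge> 0"
    and mono: "\<forall>t\<in>{1..<n}. \<forall>x\<ge>0. g t x \<le> g (Suc t) x"
    and cond: "\<forall>t\<in>{1..n}.
               g t 0 = g 1 0 \<and>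
               (\<forall>x\<ge>0. g t x \<ge> g t 0 - x) \<and>
               (g t \<longlongrightarrow> 0) at_top \<and>
               (\<forall>j\<in>{1..U t}. g t (k t j) = C t j)"
  shows "\<exists>(M :: (nat \<Rightarrow> real) measure) X.
            finite_martingale M X n \<and>
            (\<forall>t\<in>{1..n}. \<forall>\<omega>\<in>space M. X t \<omega> \<ge> 0) \<and>
            (\<forall>t\<in>{1..n}. \<forall>j\<in>{1..U t}.
               integral\<^sup>L M (\<lambda>\<omega>. max (X t \<omega> - k t j) 0) = C t j)"
proof -
  \<comment> \<open>The maximum only matters for n = 0, where no g t is constrained.\<close>
  define m where "m = max (g 1 0) 0"
  have m: "0 \<le> m"
    by (simp add: m_def)
  have at_zero: "\<forall>t\<in>{1..n}. g t 0 = m"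
  proof
    fix t assume t: "t \<in> {1..n}"
    then have "1 \<in> {1..n}"
      by simp
    then have "0 \<le> g 1 0" "g t 0 = g 1 0"
      using nonneg cond t by blast+
    then show "g t 0 = m"
      by (simp add: m_def)
  qed
  have lower: "\<forall>t\<in>{1..n}. \<forall>x\<ge>0. g t 0 - x \<le> g t x"
    and lim: "\<forall>t\<in>{1..n}. (g t \<longlongrightarrow> 0) at_top"
    using cond by blast+
  define G where "G = insert 0 ((\<lambda>(t, j). k t j) ` (SIGMA t:{1..n}. {1..U t}))"
  have G: "finite G" "0 \<in> G" "G \<subseteq> {0..}"
    using k by (auto simp: G_def)
  obtain K where K: "\<forall>t<n. martingale_kernel (K t)"
    and K_call: "\<forall>t\<in>{1..n}. \<forall>y\<in>G. pmf_call (map_pmf (\<lambda>w. w t) (path_pmf K m t)) y = g t y"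
    using exists_martingale_kernels[OF convex nonneg mono at_zero lower lim G m] by blast
  define P where "P = path_pmf K m n"
  have "measure_pmf.expectation P (\<lambda>w. max (\<bar>w t\<bar> - k t j) 0) = C t j"
    if t: "t \<in> {1..n}" and j: "j \<in> {1..U t}" for t j
  proof -
    have "k t j \<in> G"
      unfolding G_def using t j by (intro insertI2 image_eqI[where x = "(t, j)"]) auto
    then show ?thesis
      unfolding P_def using expectation_path_pmf_call[of n K m t] K m K_call cond t j by auto
  qed
  moreover have "finite_martingale (measure_pmf P) (\<lambda>t w. \<bar>w t\<bar>) n"
    unfolding P_def using K m by (intro finite_martingale_path_pmf) auto
  \<comment> \<open>The coordinates are nonnegative only on the support; the absolute value makes the
    process nonnegative on the whole space without changing it almost surely.\<close>
  ultimately show ?thesis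
    by (intro exI[of _ "measure_pmf P"] exI[of _ "\<lambda>t w. \<bar>w t\<bar>"]) simp
qed

theorem proposition3:
  fixes n :: nat and U :: "nat \<Rightarrow> nat" and k C :: "nat \<Rightarrow> nat \<Rightarrow> real"
  assumes "\<forall>t\<in>{1..n}. \<forall>j\<in>{1..U t}. k t j \<ge> 0 \<and> C t j \<ge> 0"
  shows "(\<exists>(M :: (nat \<Rightarrow> real) measure) X.
            finite_martingale M X n \<and>
            (\<forall>t\<in>{1..n}. \<forall>\<omega>\<in>space M. X t \<omega> \<ge> 0) \<and>
            (\<forall>t\<in>{1..n}. \<forall>j\<in>{1..U t}.
               integral\<^sup>L M (\<lambda>\<omega>. max (X t \<omega> - k t j) 0) = C t j))
     \<longleftrightarrow>
         (\<exists>g :: nat \<Rightarrow> real \<Rightarrow> real.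
            (\<forall>t\<in>{1..n}. convex_on {0..} (g t)) \<and>
            (\<forall>t\<in>{1..n}. \<forall>x\<ge>0. g t x \<ge> 0) \<and>
            (\<forall>t\<in>{1..<n}. \<forall>x\<ge>0. g t x \<le> g (Suc t) x) \<and>
            (\<forall>t\<in>{1..n}.
               g t 0 = g 1 0 \<and>
               (\<forall>x\<ge>0. g t x \<ge> g t 0 - x) \<and>
               (g t \<longlongrightarrow> 0) at_top \<and>
               (\<forall>j\<in>{1..U t}. g t (k t j) = C t j)))"
  by (intro iffI; elim exE conjE)
    (assumption | rule martingale_imp_call_prices call_prices_imp_martingale[OF assms])+

end
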